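(* Let $\mathcal{Y}$ be a subset of a Euclidean space $\mathbb{R}^d$, let $\mathfrak{C}$ be a polyhedral cover of $\mathcal{Y}$, and let $\mathcal{G}=\{g_1,\ldots,g_k\}$ be a vertex interpolation function basis for $\mathfrak{C}$. Define $\boldsymbol{g}:\bigcup_{C\in\mathfrak{C}}C\to\mathbb{R}^k$ by $\boldsymbol{g}(\boldsymbol{x}):=(g_1(\boldsymbol{x}),\ldots,g_k(\boldsymbol{x}))^\top$. If $V(\mathfrak{C})\subseteq\mathcal{Y}$, then $$\operatorname{conv}(\boldsymbol{g}(\mathcal{Y}))=\Big\{(z_1,\ldots,z_k)^\top:z_1\ge0,\ldots,z_k\ge0,\ \textstyle\sum_{j=1}^kz_j\le1\Big\},$$ i.e. $\operatorname{conv}(\boldsymbol{g}(\mathcal{Y}))$ is the $k$-simplex with vertices $\boldsymbol{0},\boldsymbol{e}_1,\ldots,\boldsymbol{e}_k$, where $\boldsymbol{e}_j$ is the $j$-th standard basis vector of $\mathbb{R}^k$.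
   Context: A convex $C'\subseteq C$ is a face of a convex set $C$ if $\lambda x_1+(1-\lambda)x_2\in C'$ with $0<\lambda<1$, $x_1,x_2\in C$ implies $x_1,x_2\in C'$; $x$ is an extreme point if $\{x\}$ is a face. A polyhedron is a finite intersection of closed half-spaces. A polyhedral cover of $\mathcal{Y}\subseteq\mathbb{R}^d$ is a finite collection $\mathfrak{C}$ of polyhedra, each with at least one extreme point, with $\bigcup_{C\in\mathfrak{C}}C\supseteq\mathcal{Y}$, such that whenever $C_1,C_2\in\mathfrak{C}$ intersect, $C_1\cap C_2$ is a face of both. $V(C)$ denotes the set of extreme points of $C$, $V(\mathfrak{C}):=\bigcup_{C\in\mathfrak{C}}V(C)$, and $\mathfrak{F}(\mathfrak{C})$ the set of non-empty faces of members of $\mathfrak{C}$. A vertex interpolation function set for $\mathfrak{C}$ is a family $\{g_{\boldsymbol{v}}:\bigcup_{C\in\mathfrak{C}}C\to\mathbb{R}\}_{\boldsymbol{v}\in V(\mathfrak{C})}$ with: (VIF1) $g_{\boldsymbol{v}}\ge0$; (VIF2) $g_{\boldsymbol{v}}(\boldsymbol{v}')=\mathbf{1}_{\{\boldsymbol{v}=\boldsymbol{v}'\}}$ for all $\boldsymbol{v},\boldsymbol{v}'\in V(\mathfrak{C})$; (VIF3) $\sum_{\boldsymbol{v}\in V(F)}g_{\boldsymbol{v}}(\boldsymbol{x})=1$ for every $F\in\mathfrak{F}(\mathfrak{C})$, $\boldsymbol{x}\in F$; (VIF4) $g_{\boldsymbol{v}}(\boldsymbol{x})=0$ for every $F\in\mathfrak{F}(\mathfrak{C})$,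 $\boldsymbol{x}\in F$, $\boldsymbol{v}\in V(\mathfrak{C})\setminus V(F)$. A vertex interpolation function basis for $\mathfrak{C}$ is a set consisting of all but one of the functions of some vertex interpolation function set for $\mathfrak{C}$. *)

theory Defs
  imports "HOL-Analysis.Analysis"
begin

definition vertices :: "'a::real_vector set \<Rightarrow> 'a set" where
  "vertices C = {x. x extreme_point_of C}"

definition cover_vertices :: "'a::real_vector set set \<Rightarrow> 'a set" where
  "cover_vertices \<CC> = (\<Union>C\<in>\<CC>. vertices C)"

definition cover_faces :: "'a::real_vector set set \<Rightarrow> 'a set set" where
  "cover_faces \<CC> = {F. \<exists>C\<in>\<CC>. F face_of C \<and> F \<noteq> {}}"

definition polyhedral_cover :: "'a::euclidean_space set set \<Rightarrow> 'a set \<Rightarrow> bool" where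
  "polyhedral_cover \<CC> Y \<longleftrightarrow>
     finite \<CC> \<and>
     (\<forall>C\<in>\<CC>. polyhedron C \<and> (\<exists>x. x extreme_point_of C)) \<and>
     Y \<subseteq> \<Union>\<CC> \<and>
     (\<forall>C1\<in>\<CC>. \<forall>C2\<in>\<CC>. C1 \<inter> C2 \<noteq> {} \<longrightarrow>
        (C1 \<inter> C2) face_of C1 \<and> (C1 \<inter> C2) face_of C2)"

text \<open>Vertex interpolation function set {g v}, v in V(C); only the values
  on the union of the cover matter.\<close>
definition vif_set :: "'a::real_vector set set \<Rightarrow> ('a \<Rightarrow> 'a \<Rightarrow> real) \<Rightarrow> bool" where
  "vif_set \<CC> g \<longleftrightarrow>
     (\<forall>v\<in>cover_vertices \<CC>. \<forall>x\<in>\<Union>\<CC>. g v x \<ge> 0) \<and>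
     (\<forall>v\<in>cover_vertices \<CC>. \<forall>v'\<in>cover_vertices \<CC>. g v v' = (if v = v' then 1 else 0)) \<and>
     (\<forall>F\<in>cover_faces \<CC>. \<forall>x\<in>F. (\<Sum>v\<in>vertices F. g v x) = 1) \<and>
     (\<forall>F\<in>cover_faces \<CC>. \<forall>x\<in>F. \<forall>v\<in>cover_vertices \<CC> - vertices F. g v x = 0)"

end

theory Submission
  imports Defs
begin

text \<open>Every point of the cover lies in some member C, which is a face of itself; there
  the interpolation functions of V(C) sum to one and all the others vanish. So the family
  (g v x) is a probability vector on V, and dropping the coordinate of one vertex v0 maps
  the cover into the standard simplex in \<open>\<real>\<^sup>k\<close>. Conversely, by VIF2 the
  vertices are mapped to 0 and to the unit vectors, whose convex hull is that simplex.\<close>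

lemma std_simplex_cart:
  "convex hull (insert 0 (range (\<lambda>j. axis j 1))) =
     {z :: real ^ 'k. (\<forall>j. 0 \<le> z $ j) \<and> (\<Sum>j\<in>UNIV. z $ j) \<le> 1}"
proof -
  have Basis: "(Basis :: (real ^ 'k) set) = range (\<lambda>j. axis j 1)"
    by (auto simp: Basis_vec_def)
  have "inj (\<lambda>j::'k. axis j (1::real))"
    by (simp add: inj_def axis_eq_axis)
  then have "sum ((\<bullet>) z) Basis = (\<Sum>j\<in>UNIV. z $ j)" for z :: "real ^ 'k"
    by (simp add: Basis sum.reindex inner_axis)
  then show ?thesis
    using std_simplex[where 'a = "real ^ 'k"] by (simp add: Basis inner_axis)
qed

lemma probability_vector_drop_one_in_std_simplex:
  fixes idx :: "'k::finite \<Rightarrow> 'a"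
  assumes "bij_betw idx UNIV (V - {v0})" "v0 \<in> V" "\<And>v. v \<in> V \<Longrightarrow> 0 \<le> w v" "sum w V = 1"
  shows "(\<chi> j. w (idx j)) \<in> {z :: real ^ 'k. (\<forall>j. 0 \<le> z $ j) \<and> (\<Sum>j\<in>UNIV. z $ j) \<le> 1}"
proof -
  have "finite V"
    using bij_betw_finite[OF assms(1)] by simp
  have "(\<Sum>j\<in>UNIV. w (idx j)) = sum w (V - {v0})"
    using sum.reindex_bij_betw[OF assms(1)] by simp
  also have "\<dots> = 1 - w v0"
    using \<open>finite V\<close> assms(2,4) by (simp add: sum_diff1)
  also have "\<dots> \<le> 1"
    using assms(2,3) by simp
  finally show ?thesis
    using assms(1,3) by (auto dest: bij_betw_apply)
qed

lemma vif_set_nonneg: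
  "vif_set \<CC> g \<Longrightarrow> v \<in> cover_vertices \<CC> \<Longrightarrow> x \<in> \<Union>\<CC> \<Longrightarrow> 0 \<le> g v x"
  by (auto simp: vif_set_def)

lemma vif_set_kronecker:
  "vif_set \<CC> g \<Longrightarrow> v \<in> cover_vertices \<CC> \<Longrightarrow> v' \<in> cover_vertices \<CC> \<Longrightarrow>
    g v v' = (if v = v' then 1 else 0)"
  by (simp add: vif_set_def)

lemma vif_set_sum_face:
  "vif_set \<CC> g \<Longrightarrow> F \<in> cover_faces \<CC> \<Longrightarrow> x \<in> F \<Longrightarrow> (\<Sum>v\<in>vertices F. g v x) = 1"
  by (simp add: vif_set_def)

lemma vif_set_vanishes_off_face:
  "vif_set \<CC> g \<Longrightarrow> F \<in> cover_faces \<CC> \<Longrightarrow> x \<in> F \<Longrightarrow> v \<in> cover_vertices \<CC> \<Longrightarrow>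
    v \<notin> vertices F \<Longrightarrow> g v x = 0"
  by (simp add: vif_set_def)

lemma vif_set_sum_eq_1:
  assumes "vif_set \<CC> g" "\<And>C. C \<in> \<CC> \<Longrightarrow> convex C" "finite (cover_vertices \<CC>)"
    and "x \<in> \<Union>\<CC>"
  shows "(\<Sum>v\<in>cover_vertices \<CC>. g v x) = 1"
proof -
  obtain C where C: "C \<in> \<CC>" "x \<in> C"
    using assms(4) by blast
  have "C face_of C"
    using assms(2)[OF C(1)] by (rule face_of_refl)
  then have face: "C \<in> cover_faces \<CC>"
    using C unfolding cover_faces_def by auto
  have "vertices C \<subseteq> cover_vertices \<CC>"
    using C(1) by (auto simp: cover_vertices_def)
  then have "(\<Sum>v\<in>cover_vertices \<CC>. g v x)
               = (\<Sum>v\<in>vertices C. g v x) + (\<Sum>v\<in>cover_vertices \<CC> - vertices C. g v x)"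
    using sum.subset_diff[OF _ assms(3), of "vertices C" "\<lambda>v. g v x"] by simp
  also have "\<dots> = 1"
    using vif_set_sum_face[OF assms(1) face C(2)]
      vif_set_vanishes_off_face[OF assms(1) face C(2)] by simp
  finally show ?thesis .
qed

lemma vif_set_image_cover_vertices:
  fixes idx :: "'k::finite \<Rightarrow> 'a::real_vector"
  assumes "vif_set \<CC> g" "v0 \<in> cover_vertices \<CC>"
    and "bij_betw idx UNIV (cover_vertices \<CC> - {v0})"
  shows "(\<lambda>x. \<chi> j. g (idx j) x) ` cover_vertices \<CC> = insert 0 (range (\<lambda>j. axis j 1))"
proof -
  note kronecker = vif_set_kronecker[OF assms(1)]
  have idx: "idx j \<in> cover_vertices \<CC>" "idx j \<noteq> v0" for j
    using bij_betw_apply[OF assms(3)] by auto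
  have "inj idx"
    using assms(3) by (simp add: bij_betw_def)
  then have "(\<chi> j. g (idx j) (idx i)) = axis i 1" for i
    using idx by (simp add: vec_eq_iff axis_def kronecker inj_eq)
  moreover have "(\<chi> j. g (idx j) v0) = 0"
    using idx assms(2) by (simp add: vec_eq_iff kronecker)
  moreover have "cover_vertices \<CC> = insert v0 (range idx)"
    using assms(2,3) by (auto simp: bij_betw_def)
  ultimately show ?thesis
    by (simp add: image_image)
qed

theorem proposition3p8:
  fixes Y :: "'a::euclidean_space set"
    and \<CC> :: "'a set set"
    and g :: "'a \<Rightarrow> 'a \<Rightarrow> real"
    and v0 :: 'a
    and idx :: "'k::finite \<Rightarrow> 'a"
  assumes "polyhedral_cover \<CC> Y"
    and "vif_set \<CC> g"
    and "v0 \<in> cover_vertices \<CC>"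
    and "bij_betw idx UNIV (cover_vertices \<CC> - {v0})"
    and "cover_vertices \<CC> \<subseteq> Y"
  shows "convex hull ((\<lambda>x. (\<chi> j. g (idx j) x) :: real ^ 'k) ` Y)
           = {z. (\<forall>j. 0 \<le> z $ j) \<and> (\<Sum>j\<in>UNIV. z $ j) \<le> 1}"
proof -
  let ?G = "\<lambda>x. (\<chi> j. g (idx j) x) :: real ^ 'k"
  let ?\<Delta> = "convex hull (insert 0 (range (\<lambda>j. axis j 1))) :: (real ^ 'k) set"
  have Y: "Y \<subseteq> \<Union>\<CC>" and convex: "\<And>C. C \<in> \<CC> \<Longrightarrow> convex C"
    using assms(1) polyhedron_imp_convex by (auto simp: polyhedral_cover_def)
  have "finite (cover_vertices \<CC>)"
    using bij_betw_finite[OF assms(4)] by simp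
  have "?G x \<in> ?\<Delta>" if "x \<in> Y" for x
    unfolding std_simplex_cart
  proof (rule probability_vector_drop_one_in_std_simplex[OF assms(4,3)])
    show "0 \<le> g v x" if "v \<in> cover_vertices \<CC>" for v
      using vif_set_nonneg[OF assms(2) that] \<open>x \<in> Y\<close> Y by blast
    show "(\<Sum>v\<in>cover_vertices \<CC>. g v x) = 1"
      using vif_set_sum_eq_1[OF assms(2) convex \<open>finite (cover_vertices \<CC>)\<close>] \<open>x \<in> Y\<close> Y
      by blast
  qed
  then have "convex hull (?G ` Y) \<subseteq> ?\<Delta>"
    by (intro convex_hull_subset) blast
  moreover have "insert 0 (range (\<lambda>j. axis j 1)) \<subseteq> ?G ` Y"
    using vif_set_image_cover_vertices[OF assms(2-4)] assms(5) by (metis image_mono)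
  then have "?\<Delta> \<subseteq> convex hull (?G ` Y)"
    by (rule hull_mono)
  ultimately have "convex hull (?G ` Y) = ?\<Delta>"
    by (rule antisym)
  then show ?thesis
    by (simp only: std_simplex_cart)
qed

end
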